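(* For every finite alphabet $\Sigma$ and every family of boring extensions $\mathcal E$ over $\Sigma$, the quintuple $(\Sigma^{<\omega},\sqsubseteq,\Sigma,\mathcal S,\mathcal M_{\mathcal E})$ is an $(\mathcal S,\mathcal M)$-tree.
   Context: A tree is a partially ordered set $(T,\preceq)$ such that for every $a\in T$ the set $\{b\in T:b\prec a\}$ is finite and linearly ordered by $\preceq$. The level of $a$ is $\ell(a)=|\{b\in T:b\prec a\}|$; $T(n)=\{a\in T:\ell(a)=n\}$, and $T(\le n)$, $T(<n)$ are defined analogously. A node $b$ is an immediate successor of $a$ if $a\prec b$ and there is no $c$ with $a\prec c\prec b$. An $\mathcal S$-tree is a quadruple $(T,\preceq,\Sigma,\mathcal S)$ where $(T,\preceq)$ is a countable tree in which every node has finitely many immediate successors and $T(0)$ is finite, $\Sigma$ is a set, and $\mathcal S\colon T\times T^{<\omega}\times\Sigma\to T$ is a partial function such that: (S1) if $\mathcal S(a,\bar p,c)$ is defined then it is an immediate successor of $a$ and every entry of $\bar p$ has level at most $\ell(a)-1$; (S2) if $\mathcal S(a,\bar p,c)=\mathcal S(b,\bar q,d)$ then $a=b$, $\bar p=\bar q$ and $c=d$; (S3) for every $a\in T$ and every immediate successor $b$ of $a$ there are $\bar p\in T^{<\omega}$ and $c\in\Sigma$ with $b=\mathcal S(a,\bar p,c)$. For $S\subseteq T$, a map $f\colon S\to T$ is level-preserving if $\ell(a)=\ell(b)$ implies $\ell(f(a))=\ell(f(b))$; then $\tilde f(n)$ denotes $\ell(f(a))$ for any $a\in S$ with $\ell(a)=n$.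 An injection $F\colon T\to T$ is shape-preserving if (i) it is level-preserving; (ii) whenever $\mathcal S(a,\bar p,c)$ is defined, $\mathcal S(F(a),F(\bar p),c)$ is defined and $\mathcal S(F(a),F(\bar p),c)\preceq F(\mathcal S(a,\bar p,c))$, where $F(\bar p)$ is the tuple of images of the entries of $\bar p$; (iii) for every $a\in T(0)$ and $b\in T$ with $a\preceq b$ we have $a\preceq F(b)$. A shape-preserving $F$ skips level $m$ if $m\notin\tilde F[\omega]$, and skips only level $m$ if $\tilde F[\omega]=\omega\setminus\{m\}$. An $(\mathcal S,\mathcal M)$-tree is a quintuple $(T,\preceq,\Sigma,\mathcal S,\mathcal M)$ where $(T,\preceq,\Sigma,\mathcal S)$ is an $\mathcal S$-tree and $\mathcal M$ is a set of shape-preserving functions $T\to T$ such that: (M1) $\mathrm{Id}_T\in\mathcal M$, $\mathcal M$ is closed under composition, and whenever $(F_i)_{i\in\omega}$ is a sequence in $\mathcal M$ with $F_i\restriction T(\le i)=F_{i+1}\restriction T(\le i)$ for all $i$, there is $F_\infty\in\mathcal M$ with $F_\infty\restriction T(\le i)=F_i\restriction T(\le i)$ for all $i$; (M2) for every $n\in\omega$ and every $F\in\mathcal M$ with $\tilde F(n)>0$ which skips level $\tilde F(n)-1$, there are $F_1,F_2\in\mathcal M$ such that $F_2$ skips only level $\tilde F(n)-1$ and $(F_2\circ F_1)\restriction T(\le n)=F\restriction T(\le n)$; (M3) for all $n<m$ in $\omega$ there is $F^n_m\in\mathcal M$ skipping only level $m$ such that $F^n_m(b)=\mathcal S(b,\bar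 p,c)$ whenever $a\in T(n)$, $b\in T(m)$, $\bar p\in T^{<\omega}$, $c\in\Sigma$, $\mathcal S(a,\bar p,c)$ is defined and $\mathcal S(a,\bar p,c)\preceq b$. Words: $\Sigma^{<\omega}$ is the set of finite words over the finite alphabet $\Sigma$, ordered by $\sqsubseteq$ (initial segment); the level of a word is its length. For a word $w$ and $i<|w|$, $w_i$ is its letter at index $i$ (indices start at $0$), $w|_\ell$ is its initial segment of length $\ell\le|w|$, and $u^\frown v$ denotes concatenation. The successor operation $\mathcal S$ on $\Sigma^{<\omega}$ is defined only for empty parameter tuples, by $\mathcal S(a,(),c)=a^\frown c$. A family of boring extensions over $\Sigma$ is a sequence $\mathcal E=(\mathcal E_n)_{n\in\omega}$ with $\mathcal E_n$ a set of functions $\Sigma^n\to\Sigma$ such that: (B1) for all $m<n$, the function $e^n_m\colon\Sigma^n\to\Sigma$, $e^n_m(a)=a_m$, lies in $\mathcal E_n$; (B2) for all $m\le n$, $e_1\in\mathcal E_m$, $e_2\in\mathcal E_n$ there is $e_3\in\mathcal E_{n+1}$ with $e_3(a^\frown e_1(a)^\frown b)=e_2(a^\frown b)$ for all $a\in\Sigma^m$, $b\in\Sigma^{n-m}$. For $X\subseteq\Sigma^{<\omega}$, the set of interesting levels $I_{\mathcal E}(X)$ is the set of all $\ell\in\omega$ for which there is no $e\in\mathcal E_\ell$ such that $(a|_\ell)^\frown e(a|_\ell)\sqsubseteq a$ for every $a\in X$ with $|a|\ge\ell$. $\mathcal M_{\mathcal E}$ is the set of all shape-preserving $F\colon\Sigma^{<\omega}\to\Sigma^{<\omega}$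 with $I_{\mathcal E}(F[\Sigma^{<\omega}])=\tilde F[\omega]$. *)

theory Defs
  imports Main "HOL-Library.Countable_Set" "HOL-Library.Sublist"
begin

definition strict :: "('a \<Rightarrow> 'a \<Rightarrow> bool) \<Rightarrow> 'a \<Rightarrow> 'a \<Rightarrow> bool" where
  "strict le b a \<longleftrightarrow> le b a \<and> b \<noteq> a"

definition is_tree :: "'a set \<Rightarrow> ('a \<Rightarrow> 'a \<Rightarrow> bool) \<Rightarrow> bool" where
  "is_tree T le \<longleftrightarrow>
     (\<forall>a\<in>T. le a a) \<and>
     (\<forall>a\<in>T. \<forall>b\<in>T. le a b \<and> le b a \<longrightarrow> a = b) \<and>
     (\<forall>a\<in>T. \<forall>b\<in>T. \<forall>c\<in>T. le a b \<and> le b c \<longrightarrow> le a c) \<and>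
     (\<forall>a\<in>T. finite {b\<in>T. strict le b a} \<and>
        (\<forall>b\<in>{b\<in>T. strict le b a}. \<forall>c\<in>{b\<in>T. strict le b a}. le b c \<or> le c b))"

definition level :: "'a set \<Rightarrow> ('a \<Rightarrow> 'a \<Rightarrow> bool) \<Rightarrow> 'a \<Rightarrow> nat" where
  "level T le a = card {b\<in>T. strict le b a}"

definition imm_succ :: "'a set \<Rightarrow> ('a \<Rightarrow> 'a \<Rightarrow> bool) \<Rightarrow> 'a \<Rightarrow> 'a \<Rightarrow> bool" where
  "imm_succ T le a b \<longleftrightarrow> a \<in> T \<and> b \<in> T \<and> strict le a b \<and>
     \<not> (\<exists>c\<in>T. strict le a c \<and> strict le c b)"

text \<open>The partial successor operation \<open>\<S> : T \<times> T^{<\<omega>} \<times> \<Sigma> \<rightharpoonup> T\<close> is rendered as a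
  function into an option type; tuples in \<open>T^{<\<omega>}\<close> are lists.\<close>

definition is_S_tree ::
  "'a set \<Rightarrow> ('a \<Rightarrow> 'a \<Rightarrow> bool) \<Rightarrow> 'c set \<Rightarrow> ('a \<Rightarrow> 'a list \<Rightarrow> 'c \<Rightarrow> 'a option) \<Rightarrow> bool" where
  "is_S_tree T le \<Sigma> S \<longleftrightarrow>
     is_tree T le \<and> countable T \<and>
     (\<forall>a\<in>T. finite {b. imm_succ T le a b}) \<and>
     finite {a\<in>T. level T le a = 0} \<and>
     \<comment> \<open>S is a partial function T \<times> T^{<\<omega>} \<times> \<Sigma> \<rightarrow> T\<close>
     (\<forall>a p c b. S a p c = Some b \<longrightarrow> a \<in> T \<and> set p \<subseteq> T \<and> c \<in> \<Sigma> \<and> b \<in> T) \<and>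
     \<comment> \<open>(S1)\<close>
     (\<forall>a p c b. S a p c = Some b \<longrightarrow>
        imm_succ T le a b \<and> (\<forall>x\<in>set p. level T le x + 1 \<le> level T le a)) \<and>
     \<comment> \<open>(S2)\<close>
     (\<forall>a p c b q d. S a p c \<noteq> None \<and> S a p c = S b q d \<longrightarrow> a = b \<and> p = q \<and> c = d) \<and>
     \<comment> \<open>(S3)\<close>
     (\<forall>a\<in>T. \<forall>b. imm_succ T le a b \<longrightarrow> (\<exists>p c. S a p c = Some b))"

definition level_preserving :: "'a set \<Rightarrow> ('a \<Rightarrow> 'a \<Rightarrow> bool) \<Rightarrow> 'a set \<Rightarrow> ('a \<Rightarrow> 'a) \<Rightarrow> bool" where
  "level_preserving T le A f \<longleftrightarrow>
     (\<forall>a\<in>A. \<forall>b\<in>A. level T le a = level T le b \<longrightarrow> level T le (f a) = level T le (f b))"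

definition tilde :: "'a set \<Rightarrow> ('a \<Rightarrow> 'a \<Rightarrow> bool) \<Rightarrow> ('a \<Rightarrow> 'a) \<Rightarrow> nat \<Rightarrow> nat" where
  "tilde T le F n = level T le (F (SOME a. a \<in> T \<and> level T le a = n))"

definition tilde_range :: "'a set \<Rightarrow> ('a \<Rightarrow> 'a \<Rightarrow> bool) \<Rightarrow> ('a \<Rightarrow> 'a) \<Rightarrow> nat set" where
  "tilde_range T le F = {level T le (F a) | a. a \<in> T}"

definition shape_preserving ::
  "'a set \<Rightarrow> ('a \<Rightarrow> 'a \<Rightarrow> bool) \<Rightarrow> ('a \<Rightarrow> 'a list \<Rightarrow> 'c \<Rightarrow> 'a option) \<Rightarrow> ('a \<Rightarrow> 'a) \<Rightarrow> bool" where
  "shape_preserving T le S F \<longleftrightarrow>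
     F ` T \<subseteq> T \<and> inj_on F T \<and>
     level_preserving T le T F \<and>
     (\<forall>a p c b. S a p c = Some b \<longrightarrow>
        (\<exists>b'. S (F a) (map F p) c = Some b' \<and> le b' (F b))) \<and>
     (\<forall>a\<in>T. level T le a = 0 \<longrightarrow> (\<forall>b\<in>T. le a b \<longrightarrow> le a (F b)))"

definition skips :: "'a set \<Rightarrow> ('a \<Rightarrow> 'a \<Rightarrow> bool) \<Rightarrow> ('a \<Rightarrow> 'a) \<Rightarrow> nat \<Rightarrow> bool" where
  "skips T le F m \<longleftrightarrow> m \<notin> tilde_range T le F"

definition skips_only :: "'a set \<Rightarrow> ('a \<Rightarrow> 'a \<Rightarrow> bool) \<Rightarrow> ('a \<Rightarrow> 'a) \<Rightarrow> nat \<Rightarrow> bool" where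
  "skips_only T le F m \<longleftrightarrow> tilde_range T le F = UNIV - {m}"

text \<open>Maps in \<open>\<M>\<close> are functions \<open>T \<rightarrow> T\<close>; HOL functions are total, so all equalities
  between maps are taken on the carrier T.\<close>

definition is_SM_tree ::
  "'a set \<Rightarrow> ('a \<Rightarrow> 'a \<Rightarrow> bool) \<Rightarrow> 'c set \<Rightarrow> ('a \<Rightarrow> 'a list \<Rightarrow> 'c \<Rightarrow> 'a option)
     \<Rightarrow> ('a \<Rightarrow> 'a) set \<Rightarrow> bool" where
  "is_SM_tree T le \<Sigma> S M \<longleftrightarrow>
     is_S_tree T le \<Sigma> S \<and>
     (\<forall>F\<in>M. shape_preserving T le S F) \<and>
     \<comment> \<open>(M1)\<close>
     (\<exists>G\<in>M. \<forall>a\<in>T. G a = a) \<and>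
     (\<forall>F\<in>M. \<forall>G\<in>M. \<exists>H\<in>M. \<forall>a\<in>T. H a = F (G a)) \<and>
     (\<forall>Fs :: nat \<Rightarrow> ('a \<Rightarrow> 'a).
        (\<forall>i. Fs i \<in> M) \<and>
        (\<forall>i. \<forall>a\<in>T. level T le a \<le> i \<longrightarrow> Fs i a = Fs (Suc i) a) \<longrightarrow>
        (\<exists>G\<in>M. \<forall>i. \<forall>a\<in>T. level T le a \<le> i \<longrightarrow> G a = Fs i a)) \<and>
     \<comment> \<open>(M2)\<close>
     (\<forall>n. \<forall>F\<in>M. tilde T le F n > 0 \<and> skips T le F (tilde T le F n - 1) \<longrightarrow>
        (\<exists>F1\<in>M. \<exists>F2\<in>M. skips_only T le F2 (tilde T le F n - 1) \<and>
           (\<forall>a\<in>T. level T le a \<le> n \<longrightarrow> F2 (F1 a) = F a))) \<and>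
     \<comment> \<open>(M3)\<close>
     (\<forall>n m. n < m \<longrightarrow>
        (\<exists>F\<in>M. skips_only T le F m \<and>
           (\<forall>a b p c x. a \<in> T \<and> level T le a = n \<and> b \<in> T \<and> level T le b = m \<and>
              S a p c = Some x \<and> le x b \<longrightarrow> S b p c = Some (F b))))"

definition words :: "'c set \<Rightarrow> 'c list set" where
  "words \<Sigma> = {w. set w \<subseteq> \<Sigma>}"

definition word_S :: "'c set \<Rightarrow> 'c list \<Rightarrow> 'c list list \<Rightarrow> 'c \<Rightarrow> 'c list option" where
  "word_S \<Sigma> a p c = (if set a \<subseteq> \<Sigma> \<and> p = [] \<and> c \<in> \<Sigma> then Some (a @ [c]) else None)"

text \<open>Families of boring extensions: \<open>E n\<close> is a set of functions \<open>\<Sigma>^n \<rightarrow> \<Sigma>\<close>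
  (represented by functions on lists, only their values on \<open>\<Sigma>^n\<close> matter).\<close>

definition boring_family :: "'c set \<Rightarrow> (nat \<Rightarrow> ('c list \<Rightarrow> 'c) set) \<Rightarrow> bool" where
  "boring_family \<Sigma> E \<longleftrightarrow>
     (\<forall>n. \<forall>e\<in>E n. \<forall>a. set a \<subseteq> \<Sigma> \<and> length a = n \<longrightarrow> e a \<in> \<Sigma>) \<and>
     \<comment> \<open>(B1)\<close>
     (\<forall>n m. m < n \<longrightarrow> (\<exists>e\<in>E n. \<forall>a. set a \<subseteq> \<Sigma> \<and> length a = n \<longrightarrow> e a = a ! m)) \<and>
     \<comment> \<open>(B2)\<close>
     (\<forall>m n. m \<le> n \<longrightarrow> (\<forall>e1\<in>E m. \<forall>e2\<in>E n. \<exists>e3\<in>E (Suc n).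
        \<forall>a b. set a \<subseteq> \<Sigma> \<and> length a = m \<and> set b \<subseteq> \<Sigma> \<and> length b = n - m \<longrightarrow>
          e3 (a @ [e1 a] @ b) = e2 (a @ b)))"

definition interesting_levels :: "(nat \<Rightarrow> ('c list \<Rightarrow> 'c) set) \<Rightarrow> 'c list set \<Rightarrow> nat set" where
  "interesting_levels E X =
     {l. \<not> (\<exists>e\<in>E l. \<forall>a\<in>X. length a \<ge> l \<longrightarrow> prefix (take l a @ [e (take l a)]) a)}"

definition M_E :: "'c set \<Rightarrow> (nat \<Rightarrow> ('c list \<Rightarrow> 'c) set) \<Rightarrow> ('c list \<Rightarrow> 'c list) set" where
  "M_E \<Sigma> E = {F. shape_preserving (words \<Sigma>) prefix (word_S \<Sigma>) F \<and>
       interesting_levels E (F ` words \<Sigma>) = tilde_range (words \<Sigma>) prefix F}"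

end

theory Submission
  imports Defs
begin

text \<open>A map on words belongs to \<open>M_E\<close> exactly when it is injective, length-uniform and
  satisfies \<open>prefix (F a @ [c]) (F (a @ [c]))\<close>, and each letter of its image at a level outside
  the range of \<open>F_tilde\<close> is given by a boring extension of the preceding prefix. For a composite \<open>F \<circ> G\<close>
  the only new gaps are the levels \<open>F_tilde k\<close> with \<open>k\<close> a gap of \<open>G\<close>; the letter there is the
  boring letter of \<open>G\<close> at \<open>k\<close>, and its extension is carried from the first \<open>k\<close> letters
  of the input to the first \<open>F_tilde k\<close> letters of the image one position at a time:
  positions in the range of \<open>F_tilde\<close> copy an input letter, the others hold boring letters of
  \<open>F\<close> and are absorbed by (B2). For (M2), the letter of \<open>F\<close> at the skipped level
  \<open>F_tilde n - 1\<close> is boring, so up to level \<open>n\<close> the map \<open>F\<close> is the insertion of that letter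
  after the map omitting it. For (M3), the map inserting at level \<open>m\<close> a copy of the letter at
  level \<open>n\<close> lies in \<open>M_E\<close> by (B1).\<close>

section \<open>Words as a tree\<close>

lemma words_iff: "w \<in> words \<Sigma> \<longleftrightarrow> set w \<subseteq> \<Sigma>"
  by (simp add: words_def)

lemma words_prefix: "a \<in> words \<Sigma> \<Longrightarrow> prefix b a \<Longrightarrow> b \<in> words \<Sigma>"
  by (auto simp: words_iff dest: set_mono_prefix)

lemma words_take [intro]: "a \<in> words \<Sigma> \<Longrightarrow> take i a \<in> words \<Sigma>"
  using words_prefix take_is_prefix by blast

lemma words_drop [intro]: "a \<in> words \<Sigma> \<Longrightarrow> drop i a \<in> words \<Sigma>"
  by (auto simp: words_iff dest: in_set_dropD)

lemma words_replicate [intro]: "x \<in> \<Sigma> \<Longrightarrow> replicate n x \<in> words \<Sigma>"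
  by (auto simp: words_iff)

lemma strict_prefixes_words:
  "a \<in> words \<Sigma> \<Longrightarrow> {b \<in> words \<Sigma>. strict prefix b a} = set (prefixes a) - {a}"
  by (auto simp: strict_def words_prefix)

lemma level_words [simp]: "a \<in> words \<Sigma> \<Longrightarrow> level (words \<Sigma>) prefix a = length a"
  by (simp add: level_def strict_prefixes_words card_Diff_singleton)

lemma is_tree_words: "is_tree (words \<Sigma>) prefix"
  unfolding is_tree_def by (auto simp: strict_prefixes_words dest: prefix_same_cases)

lemma imm_succ_words_iff:
  "imm_succ (words \<Sigma>) prefix a b \<longleftrightarrow> a \<in> words \<Sigma> \<and> (\<exists>c\<in>\<Sigma>. b = a @ [c])"
proof
  assume succ: "imm_succ (words \<Sigma>) prefix a b"
  then obtain c d where b: "b = a @ c # d"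
    by (metis imm_succ_def prefixE strict_def append_Nil2 neq_Nil_conv)
  have "a @ [c] \<in> words \<Sigma>"
    using succ b by (auto simp: imm_succ_def words_iff)
  then have "d = []"
    using succ b by (auto simp: imm_succ_def strict_def)
  then show "a \<in> words \<Sigma> \<and> (\<exists>c\<in>\<Sigma>. b = a @ [c])"
    using succ b by (auto simp: imm_succ_def words_iff)
next
  assume "a \<in> words \<Sigma> \<and> (\<exists>c\<in>\<Sigma>. b = a @ [c])"
  moreover have "\<not> strict_prefix d (a @ [c])" if "strict_prefix a d" for c d
  proof
    assume "strict_prefix d (a @ [c])"
    with that show False
      by (auto dest!: prefix_length_less)
  qed
  ultimately show "imm_succ (words \<Sigma>) prefix a b"
    by (auto simp: imm_succ_def strict_def words_iff strict_prefix_def)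
qed

lemma word_S_Some_iff:
  "word_S \<Sigma> a p c = Some b \<longleftrightarrow> a \<in> words \<Sigma> \<and> p = [] \<and> c \<in> \<Sigma> \<and> b = a @ [c]"
  by (auto simp: word_S_def words_iff)

lemma S_tree_words:
  assumes "finite \<Sigma>"
  shows "is_S_tree (words \<Sigma>) prefix \<Sigma> (word_S \<Sigma>)"
proof -
  have "countable (words \<Sigma>)"
    using assms by (simp add: words_def countable_finite lists_eq_set[symmetric])
  moreover have "{b. imm_succ (words \<Sigma>) prefix a b} \<subseteq> (\<lambda>c. a @ [c]) ` \<Sigma>" for a
    by (auto simp: imm_succ_words_iff)
  moreover have "{a \<in> words \<Sigma>. level (words \<Sigma>) prefix a = 0} \<subseteq> {[]}"
    by auto
  ultimately show ?thesis
    using assms unfolding is_S_tree_def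
    by (auto simp: is_tree_words imm_succ_words_iff word_S_def words_iff
        intro: finite_subset split: if_splits)
qed

section \<open>Shape-preserving maps on words\<close>

locale word_embedding =
  fixes \<Sigma> :: "'c set" and F :: "'c list \<Rightarrow> 'c list"
  assumes maps_words: "a \<in> words \<Sigma> \<Longrightarrow> F a \<in> words \<Sigma>"
    and inj: "inj_on F (words \<Sigma>)"
    and length_uniform:
      "a \<in> words \<Sigma> \<Longrightarrow> b \<in> words \<Sigma> \<Longrightarrow> length a = length b \<Longrightarrow> length (F a) = length (F b)"
    and snoc_prefix: "a \<in> words \<Sigma> \<Longrightarrow> c \<in> \<Sigma> \<Longrightarrow> prefix (F a @ [c]) (F (a @ [c]))"

lemma word_S_preserved_iff:
  assumes "F ` words \<Sigma> \<subseteq> words \<Sigma>"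
  shows "(\<forall>a p c b. word_S \<Sigma> a p c = Some b \<longrightarrow>
      (\<exists>b'. word_S \<Sigma> (F a) (map F p) c = Some b' \<and> prefix b' (F b))) \<longleftrightarrow>
    (\<forall>a\<in>words \<Sigma>. \<forall>c\<in>\<Sigma>. prefix (F a @ [c]) (F (a @ [c])))"
proof
  assume step: "\<forall>a p c b. word_S \<Sigma> a p c = Some b \<longrightarrow>
      (\<exists>b'. word_S \<Sigma> (F a) (map F p) c = Some b' \<and> prefix b' (F b))"
  show "\<forall>a\<in>words \<Sigma>. \<forall>c\<in>\<Sigma>. prefix (F a @ [c]) (F (a @ [c]))"
  proof (intro ballI)
    fix a c
    assume "a \<in> words \<Sigma>" "c \<in> \<Sigma>"
    then have "word_S \<Sigma> a [] c = Some (a @ [c])"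
      by (simp add: word_S_Some_iff)
    with step[rule_format, of a "[]" c "a @ [c]"]
    obtain b' where "word_S \<Sigma> (F a) [] c = Some b'" "prefix b' (F (a @ [c]))"
      by auto
    then show "prefix (F a @ [c]) (F (a @ [c]))"
      by (simp add: word_S_Some_iff)
  qed
next
  assume snoc: "\<forall>a\<in>words \<Sigma>. \<forall>c\<in>\<Sigma>. prefix (F a @ [c]) (F (a @ [c]))"
  show "\<forall>a p c b. word_S \<Sigma> a p c = Some b \<longrightarrow>
      (\<exists>b'. word_S \<Sigma> (F a) (map F p) c = Some b' \<and> prefix b' (F b))"
  proof (intro allI impI)
    fix a p c b
    assume "word_S \<Sigma> a p c = Some b"
    then have "a \<in> words \<Sigma>" "p = []" "c \<in> \<Sigma>" "b = a @ [c]"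
      by (simp_all add: word_S_Some_iff)
    with assms snoc show "\<exists>b'. word_S \<Sigma> (F a) (map F p) c = Some b' \<and> prefix b' (F b)"
      by (simp add: word_S_Some_iff image_subset_iff)
  qed
qed

lemma shape_preserving_words_iff:
  "shape_preserving (words \<Sigma>) prefix (word_S \<Sigma>) F \<longleftrightarrow> word_embedding \<Sigma> F"
proof -
  have levels: "level_preserving (words \<Sigma>) prefix (words \<Sigma>) F \<longleftrightarrow>
      (\<forall>a\<in>words \<Sigma>. \<forall>b\<in>words \<Sigma>. length a = length b \<longrightarrow> length (F a) = length (F b))"
    if "F ` words \<Sigma> \<subseteq> words \<Sigma>"
    using that unfolding level_preserving_def image_subset_iff by (metis level_words)
  have root: "\<forall>a\<in>words \<Sigma>. level (words \<Sigma>) prefix a = 0 \<longrightarrow>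
      (\<forall>b\<in>words \<Sigma>. prefix a b \<longrightarrow> prefix a (F b))"
    by simp
  have "word_embedding \<Sigma> F \<longleftrightarrow> F ` words \<Sigma> \<subseteq> words \<Sigma> \<and> inj_on F (words \<Sigma>) \<and>
      (\<forall>a\<in>words \<Sigma>. \<forall>b\<in>words \<Sigma>. length a = length b \<longrightarrow> length (F a) = length (F b)) \<and>
      (\<forall>a\<in>words \<Sigma>. \<forall>c\<in>\<Sigma>. prefix (F a @ [c]) (F (a @ [c])))"
    unfolding word_embedding_def by blast
  then show ?thesis
    unfolding shape_preserving_def using word_S_preserved_iff[of F \<Sigma>] levels root by blast
qed

context word_embedding
begin

lemma prefix_mono: "a \<in> words \<Sigma> \<Longrightarrow> prefix b a \<Longrightarrow> prefix (F b) (F a)"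
proof (induction a arbitrary: b rule: rev_induct)
  case (snoc c a)
  then have a: "a \<in> words \<Sigma>" and c: "c \<in> \<Sigma>"
    by (auto simp: words_iff)
  show ?case
  proof (cases "b = a @ [c]")
    case False
    with snoc.prems have "prefix (F b) (F a)"
      using snoc.IH a by (auto simp: prefix_snoc)
    also have "prefix (F a) (F (a @ [c]))"
      using snoc_prefix[OF a c] by (auto elim: prefix_order.order_trans[rotated])
    finally show ?thesis .
  qed simp
qed simp

lemma length_mono: "a \<in> words \<Sigma> \<Longrightarrow> b \<in> words \<Sigma> \<Longrightarrow> length b \<le> length a \<Longrightarrow> length (F b) \<le> length (F a)"
proof -
  assume assms: "a \<in> words \<Sigma>" "b \<in> words \<Sigma>" "length b \<le> length a"
  then have "length (F b) = length (F (take (length b) a))"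
    by (intro length_uniform) auto
  also have "\<dots> \<le> length (F a)"
    using prefix_mono[OF assms(1) take_is_prefix] by (rule prefix_length_le)
  finally show ?thesis .
qed

lemma prefix_image_letter:
  assumes "a \<in> words \<Sigma>" "i < length a"
  shows "prefix (F (take i a) @ [a ! i]) (F a)"
proof -
  have "take (Suc i) a = take i a @ [a ! i]"
    using assms(2) by (simp add: take_Suc_conv_app_nth)
  moreover have "take i a \<in> words \<Sigma>" "a ! i \<in> \<Sigma>"
    using assms by (auto simp: words_iff dest: in_set_takeD)
  ultimately have "prefix (F (take i a) @ [a ! i]) (F (take (Suc i) a))"
    using snoc_prefix by simp
  also have "prefix (F (take (Suc i) a)) (F a)"
    using assms(1) prefix_mono take_is_prefix by blast
  finally show ?thesis .
qed

lemma length_strict_mono: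
  assumes "a \<in> words \<Sigma>" "b \<in> words \<Sigma>" "length b < length a"
  shows "length (F b) < length (F a)"
proof -
  have "length (F b) = length (F (take (length b) a))"
    using assms by (intro length_uniform) auto
  then show ?thesis
    using prefix_length_le[OF prefix_image_letter[OF assms(1,3)]] by simp
qed

lemma length_ge: "a \<in> words \<Sigma> \<Longrightarrow> length a \<le> length (F a)"
proof (induction a rule: rev_induct)
  case (snoc c a)
  then show ?case
    using length_strict_mono[of "a @ [c]" a] by (auto simp: words_iff)
qed simp

abbreviation F_tilde :: "nat \<Rightarrow> nat" where
  "F_tilde \<equiv> tilde (words \<Sigma>) prefix F"

lemma F_tilde_length:
  assumes "a \<in> words \<Sigma>"
  shows "F_tilde (length a) = length (F a)"
proof -
  define b where "b = (SOME b. b \<in> words \<Sigma> \<and> level (words \<Sigma>) prefix b = length a)"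
  have "b \<in> words \<Sigma> \<and> level (words \<Sigma>) prefix b = length a"
    unfolding b_def by (rule someI[of _ a]) (use assms in simp)
  then have "b \<in> words \<Sigma>" "length b = length a"
    by auto
  then have "length (F b) = length (F a)"
    using assms length_uniform by blast
  then show ?thesis
    unfolding tilde_def b_def[symmetric] using maps_words[OF \<open>b \<in> words \<Sigma>\<close>] by simp
qed

lemma tilde_range_eq: "tilde_range (words \<Sigma>) prefix F = length ` F ` words \<Sigma>"
  unfolding tilde_range_def Setcompr_eq_image image_image
  by (rule image_cong) (simp_all add: maps_words)

lemma take_Suc_F_tilde:
  assumes "a \<in> words \<Sigma>" "i < length a"
  shows "take (Suc (F_tilde i)) (F a) = take (F_tilde i) (F a) @ [a ! i]"
proof -
  have i: "F_tilde i = length (F (take i a))"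
    using assms F_tilde_length[of "take i a"] by (simp add: words_take)
  obtain z where "F a = F (take i a) @ a ! i # z"
    using prefix_image_letter[OF assms] by (auto elim: prefixE)
  then show ?thesis
    using i by simp
qed

lemma nth_F_tilde:
  assumes "a \<in> words \<Sigma>" "i < length a"
  shows "F_tilde i < length (F a)" and "F a ! F_tilde i = a ! i"
proof -
  have "length (take (Suc (F_tilde i)) (F a)) = Suc (length (take (F_tilde i) (F a)))"
    using take_Suc_F_tilde[OF assms] by simp
  then show "F_tilde i < length (F a)"
    by simp
  then show "F a ! F_tilde i = a ! i"
    using arg_cong[OF take_Suc_F_tilde[OF assms], of "\<lambda>x. x ! F_tilde i"] by (simp add: nth_append)
qed

lemma lengths_eq_range_F_tilde:
  assumes "x \<in> \<Sigma>"
  shows "length ` F ` words \<Sigma> = range F_tilde"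
proof
  show "length ` F ` words \<Sigma> \<subseteq> range F_tilde"
    by (auto simp flip: F_tilde_length)
  show "range F_tilde \<subseteq> length ` F ` words \<Sigma>"
    using F_tilde_length[of "replicate _ x"] assms words_replicate by (fastforce simp: image_iff)
qed

lemma strict_mono_F_tilde:
  assumes "x \<in> \<Sigma>"
  shows "strict_mono F_tilde"
proof (rule strict_monoI)
  fix i j :: nat
  assume "i < j"
  then show "F_tilde i < F_tilde j"
    using length_strict_mono[of "replicate j x" "replicate i x"] assms
      F_tilde_length[of "replicate i x"] F_tilde_length[of "replicate j x"]
    by (simp add: words_replicate)
qed

end

section \<open>Boring levels\<close>

definition boring_level :: "(nat \<Rightarrow> ('c list \<Rightarrow> 'c) set) \<Rightarrow> 'c list set \<Rightarrow> nat \<Rightarrow> bool" where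
  "boring_level E X l \<longleftrightarrow> (\<exists>e\<in>E l. \<forall>x\<in>X. l < length x \<longrightarrow> x ! l = e (take l x))"

definition boring_gaps :: "(nat \<Rightarrow> ('c list \<Rightarrow> 'c) set) \<Rightarrow> 'c list set \<Rightarrow> bool" where
  "boring_gaps E X \<longleftrightarrow> (\<forall>l. l \<notin> length ` X \<longrightarrow> boring_level E X l)"

lemma prefix_take_snoc_iff: "l < length x \<Longrightarrow> prefix (take l x @ [y]) x \<longleftrightarrow> x ! l = y"
  by (subst (2) id_take_nth_drop[of l x]) auto

lemma interesting_levels_eq:
  "interesting_levels E X = length ` X \<union> {l. \<not> boring_level E X l}"
proof (intro set_eqI)
  fix l
  show "l \<in> interesting_levels E X \<longleftrightarrow> l \<in> length ` X \<union> {l. \<not> boring_level E X l}"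
  proof (cases "l \<in> length ` X")
    case True
    then obtain x where "x \<in> X" "length x = l"
      by blast
    then have "\<not> prefix (take l x @ [e (take l x)]) x" for e
      by (auto dest: prefix_length_le)
    with \<open>x \<in> X\<close> \<open>length x = l\<close> True show ?thesis
      by (auto simp: interesting_levels_def)
  next
    case False
    then have "l \<le> length x \<longleftrightarrow> l < length x" if "x \<in> X" for x
      using that by force
    then have "(\<forall>x\<in>X. l \<le> length x \<longrightarrow> prefix (take l x @ [e (take l x)]) x) \<longleftrightarrow>
        (\<forall>x\<in>X. l < length x \<longrightarrow> x ! l = e (take l x))" for e
      by (auto simp: prefix_take_snoc_iff)
    with False show ?thesis
      unfolding interesting_levels_def boring_level_def by blast
  qed
qed

lemma interesting_levels_eq_lengths_iff:
  "interesting_levels E X = length ` X \<longleftrightarrow> boring_gaps E X"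
  unfolding interesting_levels_eq boring_gaps_def by blast

lemma M_E_iff: "F \<in> M_E \<Sigma> E \<longleftrightarrow> word_embedding \<Sigma> F \<and> boring_gaps E (F ` words \<Sigma>)"
proof (cases "word_embedding \<Sigma> F")
  case True
  then show ?thesis
    by (simp add: M_E_def shape_preserving_words_iff word_embedding.tilde_range_eq
        interesting_levels_eq_lengths_iff)
qed (simp add: M_E_def shape_preserving_words_iff)

lemma boring_level_transfer:
  assumes "boring_level E Y l"
    and "\<And>x. x \<in> X \<Longrightarrow> l < length x \<Longrightarrow> \<exists>y\<in>Y. l < length y \<and> take (Suc l) y = take (Suc l) x"
  shows "boring_level E X l"
proof -
  obtain e where e: "e \<in> E l" "\<And>y. y \<in> Y \<Longrightarrow> l < length y \<Longrightarrow> y ! l = e (take l y)"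
    using assms(1) by (auto simp: boring_level_def)
  have "x ! l = e (take l x)" if x: "x \<in> X" "l < length x" for x
  proof -
    obtain y where y: "y \<in> Y" "l < length y" "take (Suc l) y = take (Suc l) x"
      using assms(2)[OF x] by blast
    then have "x ! l = y ! l" "take l x = take l y"
      by (metis lessI nth_take, metis min.absorb1 le_SucI order_refl take_take)
    then show ?thesis
      using e(2) y by simp
  qed
  with e(1) show ?thesis
    by (auto simp: boring_level_def)
qed

lemma boring_family_letter:
  assumes "boring_family \<Sigma> E" "e \<in> E n" "a \<in> words \<Sigma>" "length a = n"
  shows "e a \<in> \<Sigma>"
proof -
  have "\<forall>n. \<forall>e\<in>E n. \<forall>a. set a \<subseteq> \<Sigma> \<and> length a = n \<longrightarrow> e a \<in> \<Sigma>"
    using assms(1) unfolding boring_family_def by (rule conjunct1)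
  with assms(2-4) show ?thesis
    by (simp add: words_iff)
qed

lemma boring_family_projection:
  assumes "boring_family \<Sigma> E" "m < n"
  shows "\<exists>e\<in>E n. \<forall>a\<in>words \<Sigma>. length a = n \<longrightarrow> e a = a ! m"
proof -
  have "\<forall>n m. m < n \<longrightarrow> (\<exists>e\<in>E n. \<forall>a. set a \<subseteq> \<Sigma> \<and> length a = n \<longrightarrow> e a = a ! m)"
    using assms(1) unfolding boring_family_def by (rule conjunct1[OF conjunct2])
  from this[rule_format, OF assms(2)] obtain e
    where "e \<in> E n" "\<forall>a. set a \<subseteq> \<Sigma> \<and> length a = n \<longrightarrow> e a = a ! m"
    by blast
  then show ?thesis
    by (intro bexI[of _ e]) (auto simp: words_iff)
qed

lemma boring_family_insertion:
  assumes "boring_family \<Sigma> E" "m \<le> n" "e1 \<in> E m" "e2 \<in> E n"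
  shows "\<exists>e3\<in>E (Suc n). \<forall>a\<in>words \<Sigma>. \<forall>b\<in>words \<Sigma>. length a = m \<longrightarrow> length b = n - m \<longrightarrow>
           e3 (a @ e1 a # b) = e2 (a @ b)"
proof -
  have "\<forall>m n. m \<le> n \<longrightarrow> (\<forall>e1\<in>E m. \<forall>e2\<in>E n. \<exists>e3\<in>E (Suc n).
        \<forall>a b. set a \<subseteq> \<Sigma> \<and> length a = m \<and> set b \<subseteq> \<Sigma> \<and> length b = n - m \<longrightarrow>
          e3 (a @ [e1 a] @ b) = e2 (a @ b))"
    using assms(1) unfolding boring_family_def by (rule conjunct2[OF conjunct2])
  from this[rule_format, OF assms(2-4)] obtain e3 where "e3 \<in> E (Suc n)" and
    "\<forall>a b. set a \<subseteq> \<Sigma> \<and> length a = m \<and> set b \<subseteq> \<Sigma> \<and> length b = n - m \<longrightarrow>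
       e3 (a @ [e1 a] @ b) = e2 (a @ b)"
    by blast
  then show ?thesis
    by (intro bexI[of _ e3]) (auto simp: words_iff)
qed

locale boring_embedding = word_embedding \<Sigma> F for \<Sigma> :: "'c set" and F +
  fixes E :: "nat \<Rightarrow> ('c list \<Rightarrow> 'c) set"
  assumes boring_family: "boring_family \<Sigma> E"
    and boring_gaps: "boring_gaps E (F ` words \<Sigma>)"

lemma M_E_iff_boring_embedding:
  "boring_family \<Sigma> E \<Longrightarrow> F \<in> M_E \<Sigma> E \<longleftrightarrow> boring_embedding \<Sigma> F E"
  by (simp add: M_E_iff boring_embedding_def boring_embedding_axioms_def)

lemma strict_mono_below_range: "strict_mono (f :: nat \<Rightarrow> 'a::linorder) \<Longrightarrow> p < f 0 \<Longrightarrow> p \<notin> range f"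
  by (auto simp: strict_mono_less)

lemma strict_mono_between_range: "strict_mono (f :: nat \<Rightarrow> 'a::linorder) \<Longrightarrow> f i < p \<Longrightarrow> p < f (Suc i) \<Longrightarrow> p \<notin> range f"
  by (auto simp: strict_mono_less)

context boring_embedding
begin

text \<open>Invariant of the transport argument: \<open>e\<close> on the first \<open>k\<close> letters of \<open>u\<close> is
  computed by a member of \<open>E\<close> from the first \<open>j\<close> letters of \<open>F u\<close> followed by the letters
  of \<open>u\<close> at positions \<open>i, \<dots>, k - 1\<close>; it is moved from \<open>(0, 0)\<close> to \<open>(F_tilde k, k)\<close>.\<close>

definition transported :: "nat \<Rightarrow> ('c list \<Rightarrow> 'c) \<Rightarrow> nat \<Rightarrow> nat \<Rightarrow> bool" where
  "transported k e j i \<longleftrightarrow> (\<exists>e'\<in>E (j + (k - i)). \<forall>u\<in>words \<Sigma>. k \<le> length u \<longrightarrow>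
     e' (take j (F u) @ drop i (take k u)) = e (take k u))"

lemma transported_start: "e \<in> E k \<Longrightarrow> transported k e 0 0"
  by (auto simp: transported_def)

lemma transported_copy:
  assumes "i < k" "transported k e (F_tilde i) i"
  shows "transported k e (Suc (F_tilde i)) (Suc i)"
proof -
  obtain e' where e': "e' \<in> E (F_tilde i + (k - i))"
    and e'_eq: "\<And>u. u \<in> words \<Sigma> \<Longrightarrow> k \<le> length u \<Longrightarrow>
      e' (take (F_tilde i) (F u) @ drop i (take k u)) = e (take k u)"
    using assms(2) by (auto simp: transported_def)
  have "take (Suc (F_tilde i)) (F u) @ drop (Suc i) (take k u) =
      take (F_tilde i) (F u) @ drop i (take k u)" if u: "u \<in> words \<Sigma>" "k \<le> length u" for u
    using take_Suc_F_tilde[OF u(1)] Cons_nth_drop_Suc[of i "take k u"] u assms(1) by simp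
  moreover have "Suc (F_tilde i) + (k - Suc i) = F_tilde i + (k - i)"
    using assms(1) by simp
  ultimately show ?thesis
    using e' e'_eq unfolding transported_def by (metis (no_types, lifting))
qed

lemma transported_gap:
  assumes "transported k e j i" "j \<notin> length ` F ` words \<Sigma>" "j < F_tilde k"
  shows "transported k e (Suc j) i"
proof -
  obtain e2 where e2: "e2 \<in> E (j + (k - i))"
    and e2_eq: "\<And>u. u \<in> words \<Sigma> \<Longrightarrow> k \<le> length u \<Longrightarrow>
      e2 (take j (F u) @ drop i (take k u)) = e (take k u)"
    using assms(1) by (auto simp: transported_def)
  have "boring_level E (F ` words \<Sigma>) j"
    using boring_gaps assms(2) by (simp add: boring_gaps_def)
  then obtain e1 where e1: "e1 \<in> E j"
    and e1_eq: "\<And>x. x \<in> F ` words \<Sigma> \<Longrightarrow> j < length x \<Longrightarrow> x ! j = e1 (take j x)"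
    unfolding boring_level_def by blast
  obtain e3 where e3: "e3 \<in> E (Suc (j + (k - i)))"
    and e3_eq: "\<And>a b. a \<in> words \<Sigma> \<Longrightarrow> b \<in> words \<Sigma> \<Longrightarrow> length a = j \<Longrightarrow>
      length b = k - i \<Longrightarrow> e3 (a @ e1 a # b) = e2 (a @ b)"
    using boring_family_insertion[OF boring_family le_add1 e1 e2] by auto
  have "e3 (take (Suc j) (F u) @ drop i (take k u)) = e (take k u)"
    if u: "u \<in> words \<Sigma>" "k \<le> length u" for u
  proof -
    have "F_tilde k = length (F (take k u))"
      using u F_tilde_length[of "take k u"] by (simp add: words_take)
    also have "\<dots> \<le> length (F u)"
      using u by (intro length_mono) (auto simp: words_take)
    finally have j: "j < length (F u)"
      using assms(3) by simp
    then have "take (Suc j) (F u) = take j (F u) @ [e1 (take j (F u))]"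
      using e1_eq[of "F u"] u(1) by (simp add: take_Suc_conv_app_nth)
    then show ?thesis
      using e3_eq[of "take j (F u)" "drop i (take k u)"] e2_eq[OF u] u j maps_words
      by (simp add: words_take words_drop)
  qed
  with e3 show ?thesis
    by (auto simp: transported_def)
qed

lemma transported_gaps:
  assumes "transported k e j i" "j \<le> j'" "j' \<le> F_tilde k"
    and "\<And>p. j \<le> p \<Longrightarrow> p < j' \<Longrightarrow> p \<notin> length ` F ` words \<Sigma>"
  shows "transported k e j' i"
  using assms(2-4)
proof (induction j' rule: dec_induct)
  case base
  show ?case
    using assms(1) .
next
  case (step p)
  then show ?case
    using transported_gap by simp
qed

lemma boring_transport:
  assumes "x \<in> \<Sigma>" "e \<in> E k"
  shows "\<exists>e'\<in>E (F_tilde k). \<forall>u\<in>words \<Sigma>. k \<le> length u \<longrightarrow> e' (take (F_tilde k) (F u)) = e (take k u)"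
proof -
  have mono: "strict_mono F_tilde" and range: "length ` F ` words \<Sigma> = range F_tilde"
    using assms(1) by (rule strict_mono_F_tilde, rule lengths_eq_range_F_tilde)
  have "transported k e (F_tilde i) i" if "i \<le> k" for i
    using that
  proof (induction i)
    case 0
    have "F_tilde 0 \<le> F_tilde k"
      using mono by (simp add: strict_mono_less_eq)
    moreover have "p \<notin> length ` F ` words \<Sigma>" if "p < F_tilde 0" for p
      using strict_mono_below_range[OF mono that] range by simp
    ultimately show ?case
      by (intro transported_gaps[OF transported_start[OF assms(2)]]) auto
  next
    case (Suc i)
    then have i: "i < k" and "transported k e (F_tilde i) i"
      by simp_all
    then have "transported k e (Suc (F_tilde i)) (Suc i)"
      by (rule transported_copy)
    moreover have "Suc (F_tilde i) \<le> F_tilde (Suc i)"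
      using mono by (simp add: strict_mono_less Suc_le_eq)
    moreover have "F_tilde (Suc i) \<le> F_tilde k"
      using mono Suc.prems by (simp add: strict_mono_less_eq)
    moreover have "p \<notin> length ` F ` words \<Sigma>" if "Suc (F_tilde i) \<le> p" "p < F_tilde (Suc i)" for p
      using strict_mono_between_range[OF mono _ that(2)] that(1) range by simp
    ultimately show ?case
      by (rule transported_gaps)
  qed
  from this[of k] show ?thesis
    by (simp add: transported_def)
qed

end

section \<open>Closure of the maps under identity, composition and limits\<close>

lemma M_E_id:
  assumes "x \<in> \<Sigma>"
  shows "(\<lambda>a. a) \<in> M_E \<Sigma> E"
proof -
  have "word_embedding \<Sigma> (\<lambda>a. a)"
    by (simp add: word_embedding_def)
  moreover have "l \<in> length ` (\<lambda>a. a) ` words \<Sigma>" for l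
    using assms by (intro image_eqI[of _ length "replicate l x"]) auto
  ultimately show ?thesis
    by (simp add: M_E_iff boring_gaps_def)
qed

lemma word_embedding_comp:
  assumes "word_embedding \<Sigma> F" "word_embedding \<Sigma> G"
  shows "word_embedding \<Sigma> (\<lambda>a. F (G a))"
proof -
  interpret F: word_embedding \<Sigma> F by fact
  interpret G: word_embedding \<Sigma> G by fact
  show ?thesis
  proof
    fix a
    assume "a \<in> words \<Sigma>"
    then show "F (G a) \<in> words \<Sigma>"
      by (intro F.maps_words G.maps_words)
  next
    have "G ` words \<Sigma> \<subseteq> words \<Sigma>"
      using G.maps_words by blast
    then show "inj_on (\<lambda>a. F (G a)) (words \<Sigma>)"
      using comp_inj_on[OF G.inj inj_on_subset[OF F.inj]] by (simp add: comp_def)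
  next
    fix a b
    assume "a \<in> words \<Sigma>" "b \<in> words \<Sigma>" "length a = length b"
    then show "length (F (G a)) = length (F (G b))"
      by (intro F.length_uniform G.maps_words G.length_uniform)
  next
    fix a c
    assume a: "a \<in> words \<Sigma>" and c: "c \<in> \<Sigma>"
    have "prefix (F (G a) @ [c]) (F (G a @ [c]))"
      using F.snoc_prefix G.maps_words a c by blast
    also have "prefix (F (G a @ [c])) (F (G (a @ [c])))"
      using F.prefix_mono G.maps_words G.snoc_prefix a c by (simp add: words_iff)
    finally show "prefix (F (G a) @ [c]) (F (G (a @ [c])))" .
  qed
qed

lemma (in boring_embedding) boring_level_comp:
  assumes "x \<in> \<Sigma>" "word_embedding \<Sigma> G" "b \<in> words \<Sigma>"
    and "boring_level E (G ` words \<Sigma>) (length b)"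
  shows "boring_level E ((\<lambda>a. F (G a)) ` words \<Sigma>) (length (F b))"
proof -
  interpret G: word_embedding \<Sigma> G by fact
  define k l where "k = length b" and "l = length (F b)"
  obtain e where e: "e \<in> E k"
    and e_eq: "\<And>y. y \<in> G ` words \<Sigma> \<Longrightarrow> k < length y \<Longrightarrow> y ! k = e (take k y)"
    using assms(4) unfolding boring_level_def k_def by blast
  have lk: "F_tilde k = l"
    using F_tilde_length[OF assms(3)] k_def l_def by simp
  obtain e' where e': "e' \<in> E l"
    and e'_eq: "\<And>u. u \<in> words \<Sigma> \<Longrightarrow> k \<le> length u \<Longrightarrow> e' (take l (F u)) = e (take k u)"
    using boring_transport[OF assms(1) e] lk by blast
  have "F (G a) ! l = e' (take l (F (G a)))"
    if a: "a \<in> words \<Sigma>" "l < length (F (G a))" for a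
  proof -
    have Ga: "G a \<in> words \<Sigma>"
      using a(1) by (rule G.maps_words)
    have "k < length (G a)"
    proof (rule ccontr)
      assume "\<not> k < length (G a)"
      then have "length (F (G a)) \<le> l"
        using length_mono[OF assms(3) Ga] k_def l_def by simp
      with a(2) show False
        by simp
    qed
    then have "F (G a) ! l = G a ! k"
      using nth_F_tilde(2)[OF Ga] lk by metis
    also have "\<dots> = e' (take l (F (G a)))"
      using e_eq[of "G a"] e'_eq[OF Ga] a(1) \<open>k < length (G a)\<close> by simp
    finally show ?thesis .
  qed
  with e' show ?thesis
    unfolding l_def by (auto simp: boring_level_def)
qed

lemma M_E_comp:
  assumes E: "boring_family \<Sigma> E" and "x \<in> \<Sigma>" and FM: "F \<in> M_E \<Sigma> E" and GM: "G \<in> M_E \<Sigma> E"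
  shows "(\<lambda>a. F (G a)) \<in> M_E \<Sigma> E"
proof -
  interpret F: boring_embedding \<Sigma> F E
    using FM E by (simp add: M_E_iff_boring_embedding)
  interpret G: boring_embedding \<Sigma> G E
    using GM E by (simp add: M_E_iff_boring_embedding)
  have "boring_level E ((\<lambda>a. F (G a)) ` words \<Sigma>) l"
    if l: "l \<notin> length ` (\<lambda>a. F (G a)) ` words \<Sigma>" for l
  proof (cases "l \<in> length ` F ` words \<Sigma>")
    case False
    then have "boring_level E (F ` words \<Sigma>) l"
      using F.boring_gaps by (simp add: boring_gaps_def)
    then show ?thesis
      by (rule boring_level_transfer) (use G.maps_words in auto)
  next
    case True
    then obtain b where b: "b \<in> words \<Sigma>" "l = length (F b)"
      by blast
    have "length b \<notin> length ` G ` words \<Sigma>"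
    proof
      assume "length b \<in> length ` G ` words \<Sigma>"
      then obtain a where a: "a \<in> words \<Sigma>" "length b = length (G a)"
        by blast
      have "length (F (G a)) = l"
        unfolding b(2) by (rule F.length_uniform[OF G.maps_words[OF a(1)] b(1) a(2)[symmetric]])
      with l a(1) show False
        by blast
    qed
    then have "boring_level E (G ` words \<Sigma>) (length b)"
      using G.boring_gaps by (simp add: boring_gaps_def)
    then show ?thesis
      using F.boring_level_comp[OF \<open>x \<in> \<Sigma>\<close> G.word_embedding_axioms b(1)] b(2) by simp
  qed
  then show ?thesis
    using word_embedding_comp[OF F.word_embedding_axioms G.word_embedding_axioms]
    by (simp add: M_E_iff boring_gaps_def)
qed

lemma prefix_take_eq: "prefix y x \<Longrightarrow> n \<le> length y \<Longrightarrow> take n y = take n x"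
  by (auto elim!: prefixE)

lemma stable_sequence_eq:
  assumes "\<And>i a. a \<in> words \<Sigma> \<Longrightarrow> length a \<le> i \<Longrightarrow> Fs i a = Fs (Suc i) a"
    and "a \<in> words \<Sigma>" "length a \<le> i"
  shows "Fs (length a) a = Fs i a"
  using assms(3)
proof (induction i rule: dec_induct)
  case (step i)
  then show ?case
    using assms(1)[OF assms(2), of i] by simp
qed simp

lemma word_embedding_limit:
  assumes Fs: "\<And>i. word_embedding \<Sigma> (Fs i)"
    and agree: "\<And>i a. a \<in> words \<Sigma> \<Longrightarrow> length a \<le> i \<Longrightarrow> Fs i a = Fs (Suc i) a"
  shows "word_embedding \<Sigma> (\<lambda>a. Fs (length a) a)"
proof
  fix a
  assume "a \<in> words \<Sigma>"
  then show "Fs (length a) a \<in> words \<Sigma>"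
    by (rule word_embedding.maps_words[OF Fs])
next
  show "inj_on (\<lambda>a. Fs (length a) a) (words \<Sigma>)"
  proof (rule inj_onI)
    fix a b
    assume ab: "a \<in> words \<Sigma>" "b \<in> words \<Sigma>" "Fs (length a) a = Fs (length b) b"
    define m where "m = max (length a) (length b)"
    have "Fs (length a) a = Fs m a" "Fs (length b) b = Fs m b"
      using stable_sequence_eq[of \<Sigma> Fs, OF agree] ab(1,2) by (simp_all add: m_def)
    with ab show "a = b"
      using word_embedding.inj[OF Fs] by (auto dest: inj_onD)
  qed
next
  fix a b
  assume ab: "a \<in> words \<Sigma>" "b \<in> words \<Sigma>" "length a = length b"
  then have "length (Fs (length a) a) = length (Fs (length a) b)"
    by (intro word_embedding.length_uniform[OF Fs])
  with ab(3) show "length (Fs (length a) a) = length (Fs (length b) b)"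
    by simp
next
  fix a c
  assume a: "a \<in> words \<Sigma>" and c: "c \<in> \<Sigma>"
  have "Fs (length a) a = Fs (Suc (length a)) a"
    using stable_sequence_eq[of \<Sigma> Fs, OF agree a] by simp
  then show "prefix (Fs (length a) a @ [c]) (Fs (length (a @ [c])) (a @ [c]))"
    using word_embedding.snoc_prefix[OF Fs a c] by simp
qed

lemma limit_gap:
  assumes Fs: "\<And>i. word_embedding \<Sigma> (Fs i)"
    and agree: "\<And>i a. a \<in> words \<Sigma> \<Longrightarrow> length a \<le> i \<Longrightarrow> Fs i a = Fs (Suc i) a"
    and l: "l \<notin> length ` (\<lambda>a. Fs (length a) a) ` words \<Sigma>"
  shows "l \<notin> length ` Fs (Suc l) ` words \<Sigma>"
proof
  assume "l \<in> length ` Fs (Suc l) ` words \<Sigma>"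
  then obtain a where a: "a \<in> words \<Sigma>" "l = length (Fs (Suc l) a)"
    unfolding image_image by (rule imageE)
  show False
  proof (cases "length a \<le> Suc l")
    case True
    then have "length (Fs (length a) a) = l"
      using stable_sequence_eq[of \<Sigma> Fs, OF agree a(1) True] a(2)[symmetric] by simp
    then have "l \<in> length ` (\<lambda>a. Fs (length a) a) ` words \<Sigma>"
      unfolding image_image using a(1) by (intro image_eqI[where x = a]) simp_all
    with l show False ..
  next
    case False
    then show False
      using word_embedding.length_ge[OF Fs a(1), of "Suc l"] a(2)[symmetric] by simp
  qed
qed

lemma boring_gaps_limit:
  assumes Fs: "\<And>i. word_embedding \<Sigma> (Fs i)" "\<And>i. boring_gaps E (Fs i ` words \<Sigma>)"
    and agree: "\<And>i a. a \<in> words \<Sigma> \<Longrightarrow> length a \<le> i \<Longrightarrow> Fs i a = Fs (Suc i) a"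
  shows "boring_gaps E ((\<lambda>a. Fs (length a) a) ` words \<Sigma>)"
  unfolding boring_gaps_def
proof (intro allI impI)
  define G where "G a = Fs (length a) a" for a
  have G: "word_embedding \<Sigma> G"
    unfolding G_def[abs_def] using word_embedding_limit[of \<Sigma> Fs, OF Fs(1) agree] .
  fix l
  assume "l \<notin> length ` (\<lambda>a. Fs (length a) a) ` words \<Sigma>"
  with Fs(1) agree have "l \<notin> length ` Fs (Suc l) ` words \<Sigma>"
    by (rule limit_gap)
  then have "boring_level E (Fs (Suc l) ` words \<Sigma>) l"
    using Fs(2) by (simp add: boring_gaps_def)
  then have "boring_level E (G ` words \<Sigma>) l"
  proof (rule boring_level_transfer)
    fix x
    assume "x \<in> G ` words \<Sigma>" "l < length x"
    then obtain a where a: "a \<in> words \<Sigma>" "x = G a" "l < length (G a)"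
      by blast
    define y where "y = take (Suc l) a"
    have y: "y \<in> words \<Sigma>" "length y \<le> Suc l"
      using a(1) by (simp_all add: y_def words_take)
    have Gy: "G y = Fs (Suc l) y"
      unfolding G_def using stable_sequence_eq[of \<Sigma> Fs, OF agree y] .
    have "l < length (G y)"
    proof (cases "length a \<le> Suc l")
      case False
      then show ?thesis
        using word_embedding.length_ge[OF G y(1)] y_def by simp
    qed (use a in \<open>simp add: y_def\<close>)
    moreover have "prefix (G y) (G a)"
      unfolding y_def using word_embedding.prefix_mono[OF G a(1) take_is_prefix] .
    ultimately show "\<exists>z\<in>Fs (Suc l) ` words \<Sigma>. l < length z \<and> take (Suc l) z = take (Suc l) x"
      using y Gy a(2) prefix_take_eq by (metis Suc_leI image_eqI)
  qed
  then show "boring_level E ((\<lambda>a. Fs (length a) a) ` words \<Sigma>) l"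
    by (simp add: G_def[abs_def])
qed

lemma M_E_limit:
  assumes FsM: "\<And>i. Fs i \<in> M_E \<Sigma> E"
    and agree: "\<And>i a. a \<in> words \<Sigma> \<Longrightarrow> length a \<le> i \<Longrightarrow> Fs i a = Fs (Suc i) a"
  shows "\<exists>G\<in>M_E \<Sigma> E. \<forall>i. \<forall>a\<in>words \<Sigma>. length a \<le> i \<longrightarrow> G a = Fs i a"
proof
  have Fs: "word_embedding \<Sigma> (Fs i)" "boring_gaps E (Fs i ` words \<Sigma>)" for i
    using FsM by (simp_all add: M_E_iff)
  show "(\<lambda>a. Fs (length a) a) \<in> M_E \<Sigma> E"
    using word_embedding_limit[of \<Sigma> Fs, OF Fs(1) agree] boring_gaps_limit[of \<Sigma> Fs, OF Fs agree]
    by (simp add: M_E_iff)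
  show "\<forall>i. \<forall>a\<in>words \<Sigma>. length a \<le> i \<longrightarrow> Fs (length a) a = Fs i a"
    using stable_sequence_eq[of \<Sigma> Fs, OF agree] by blast
qed

section \<open>Inserting a boring letter\<close>

definition insert_letter :: "nat \<Rightarrow> ('c list \<Rightarrow> 'c) \<Rightarrow> 'c list \<Rightarrow> 'c list" where
  "insert_letter L e w = (if length w < L then w else take L w @ e (take L w) # drop L w)"

lemma length_insert_letter:
  "length (insert_letter L e w) = (if length w < L then length w else Suc (length w))"
  by (simp add: insert_letter_def)

lemma insert_letter_snoc: "length w = L \<Longrightarrow> insert_letter L e w = w @ [e w]"
  by (simp add: insert_letter_def)

lemma word_embedding_insert_letter:
  assumes "boring_family \<Sigma> E" "e \<in> E L"
  shows "word_embedding \<Sigma> (insert_letter L e)"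
proof
  fix a
  assume a: "a \<in> words \<Sigma>"
  then have "\<not> length a < L \<Longrightarrow> e (take L a) \<in> \<Sigma>"
    using boring_family_letter[OF assms] by (simp add: words_take)
  with a show "insert_letter L e a \<in> words \<Sigma>"
    by (auto simp: insert_letter_def words_iff dest: in_set_takeD in_set_dropD)
next
  show "inj_on (insert_letter L e) (words \<Sigma>)"
    by (rule inj_on_inverseI[where g = "\<lambda>w. if length w \<le> L then w else take L w @ drop (Suc L) w"])
      (simp add: insert_letter_def)
next
  fix a b
  assume "a \<in> words \<Sigma>" "b \<in> words \<Sigma>" "length a = length b"
  then show "length (insert_letter L e a) = length (insert_letter L e b)"
    by (simp add: length_insert_letter)
next
  fix a c
  assume "a \<in> words \<Sigma>" "c \<in> \<Sigma>"
  show "prefix (insert_letter L e a @ [c]) (insert_letter L e (a @ [c]))"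
    by (cases "length a < L"; cases "Suc (length a) < L") (auto simp: insert_letter_def)
qed

lemma lengths_insert_letter:
  assumes "x \<in> \<Sigma>"
  shows "length ` insert_letter L e ` words \<Sigma> = UNIV - {L}"
proof
  show "length ` insert_letter L e ` words \<Sigma> \<subseteq> UNIV - {L}"
    by (auto simp: length_insert_letter split: if_splits)
  have "l \<in> (\<lambda>w. length (insert_letter L e w)) ` words \<Sigma>" if "l \<noteq> L" for l
  proof (cases "l < L")
    case True
    then show ?thesis
      using assms by (intro image_eqI[of _ _ "replicate l x"])
        (auto simp: length_insert_letter words_replicate)
  next
    case False
    with that show ?thesis
      using assms by (intro image_eqI[of _ _ "replicate (l - 1) x"])
        (auto simp: length_insert_letter words_replicate)
  qed
  then show "UNIV - {L} \<subseteq> length ` insert_letter L e ` words \<Sigma>"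
    by (auto simp: image_image)
qed

lemma M_E_insert_letter:
  assumes "boring_family \<Sigma> E" "e \<in> E L" "x \<in> \<Sigma>"
  shows "insert_letter L e \<in> M_E \<Sigma> E"
    and "skips_only (words \<Sigma>) prefix (insert_letter L e) L"
proof -
  interpret word_embedding \<Sigma> "insert_letter L e"
    using assms(1,2) by (rule word_embedding_insert_letter)
  have "boring_level E (insert_letter L e ` words \<Sigma>) L"
    unfolding boring_level_def
    by (intro bexI[OF _ assms(2)]) (auto simp: insert_letter_def nth_append)
  then show "insert_letter L e \<in> M_E \<Sigma> E"
    using lengths_insert_letter[OF assms(3)] word_embedding_axioms
    by (simp add: M_E_iff boring_gaps_def)
  show "skips_only (words \<Sigma>) prefix (insert_letter L e) L"
    using lengths_insert_letter[OF assms(3)] by (simp add: skips_only_def tilde_range_eq)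
qed

lemma M_E_successor_copy:
  assumes "boring_family \<Sigma> E" "x \<in> \<Sigma>" "n < m"
  shows "\<exists>F\<in>M_E \<Sigma> E. skips_only (words \<Sigma>) prefix F m \<and>
    (\<forall>a b p c y. a \<in> words \<Sigma> \<and> level (words \<Sigma>) prefix a = n \<and>
       b \<in> words \<Sigma> \<and> level (words \<Sigma>) prefix b = m \<and>
       word_S \<Sigma> a p c = Some y \<and> prefix y b \<longrightarrow> word_S \<Sigma> b p c = Some (F b))"
proof -
  obtain e where e: "e \<in> E m" and e_eq: "\<And>b. b \<in> words \<Sigma> \<Longrightarrow> length b = m \<Longrightarrow> e b = b ! n"
    using boring_family_projection[OF assms(1,3)] by blast
  have "word_S \<Sigma> b p c = Some (insert_letter m e b)"
    if "a \<in> words \<Sigma>" "length a = n" "b \<in> words \<Sigma>" "length b = m"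
      "word_S \<Sigma> a p c = Some y" "prefix y b" for a b p c y
  proof -
    have "p = []" "c \<in> \<Sigma>" "prefix (a @ [c]) b"
      using that(5,6) by (simp_all add: word_S_Some_iff)
    then have "b ! n = c"
      using that(2) by (auto elim!: prefixE simp: nth_append)
    then show ?thesis
      using that e_eq \<open>p = []\<close> \<open>c \<in> \<Sigma>\<close> by (simp add: word_S_Some_iff insert_letter_snoc)
  qed
  then show ?thesis
    using M_E_insert_letter[OF assms(1) e assms(2)] by (intro bexI[of _ "insert_letter m e"]) auto
qed

section \<open>Factoring out a skipped level\<close>

lemma prefix_take: "prefix x y \<Longrightarrow> length x \<le> n \<Longrightarrow> prefix x (take n y)"
  by (auto elim!: prefixE)

locale skipped_level = boring_embedding \<Sigma> F E for \<Sigma> :: "'c set" and F E +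
  fixes n L :: nat and eL :: "'c list \<Rightarrow> 'c"
  assumes nonempty: "\<Sigma> \<noteq> {}"
    and level_n: "F_tilde n = Suc L"
    and skipped: "L \<notin> length ` F ` words \<Sigma>"
    and eL: "eL \<in> E L"
    and eL_eq: "a \<in> words \<Sigma> \<Longrightarrow> L < length (F a) \<Longrightarrow> F a ! L = eL (take L (F a))"
begin

lemma length_level_n: "a \<in> words \<Sigma> \<Longrightarrow> length a = n \<Longrightarrow> length (F a) = Suc L"
  using F_tilde_length level_n by metis

lemma length_below_n:
  assumes "a \<in> words \<Sigma>" "length a < n"
  shows "length (F a) < L"
proof -
  obtain x where "x \<in> \<Sigma>"
    using nonempty by blast
  then have "F_tilde (length a) < F_tilde n"
    using assms(2) strict_mono_F_tilde by (simp add: strict_mono_less)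
  then have "length (F a) < Suc L"
    using F_tilde_length[OF assms(1)] level_n by simp
  moreover have "length (F a) \<noteq> L"
    using skipped assms(1) by blast
  ultimately show ?thesis
    by simp
qed

lemma level_n_letter: "a \<in> words \<Sigma> \<Longrightarrow> length a = n \<Longrightarrow> F a = take L (F a) @ [eL (take L (F a))]"
  using length_level_n eL_eq[of a] by (metis lessI take_Suc_conv_app_nth take_all order_refl)

text \<open>On words of length at least \<open>n\<close>, the first factor omits the boring letter of \<open>F\<close> at
  position \<open>L\<close> and copies the letters beyond level \<open>n\<close>.\<close>

definition first_factor :: "'c list \<Rightarrow> 'c list" where
  "first_factor w = (if length w < n then F w else take L (F (take n w)) @ drop n w)"

lemma length_first_factor:
  "w \<in> words \<Sigma> \<Longrightarrow> length (first_factor w) = (if length w < n then length (F w) else L + (length w - n))"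
  using length_level_n[of "take n w"] by (simp add: first_factor_def words_take)

lemma insert_letter_first_factor:
  assumes "w \<in> words \<Sigma>" "n \<le> length w"
  shows "insert_letter L eL (first_factor w) = F (take n w) @ drop n w"
proof -
  have "take n w \<in> words \<Sigma>" "length (take n w) = n"
    using assms by (simp_all add: words_take)
  then show ?thesis
    using level_n_letter length_level_n assms(2)
    by (simp add: first_factor_def insert_letter_def)
qed

lemma insert_letter_first_factor_eq:
  assumes "a \<in> words \<Sigma>" "length a \<le> n"
  shows "insert_letter L eL (first_factor a) = F a"
proof (cases "length a < n")
  case True
  then show ?thesis
    using length_below_n[OF assms(1)] by (simp add: first_factor_def insert_letter_def)
next
  case False
  with assms show ?thesis
    using insert_letter_first_factor by simp
qed

lemma short_first_factor_iff:
  "w \<in> words \<Sigma> \<Longrightarrow> length (first_factor w) < L \<longleftrightarrow> length w < n"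
  using length_first_factor length_below_n by auto

lemma inj_on_first_factor: "inj_on first_factor (words \<Sigma>)"
proof (rule inj_onI)
  fix a b
  assume a: "a \<in> words \<Sigma>" and b: "b \<in> words \<Sigma>" and eq: "first_factor a = first_factor b"
  then have short: "length a < n \<longleftrightarrow> length b < n"
    using short_first_factor_iff by metis
  show "a = b"
  proof (cases "length a < n")
    case True
    with eq short have "F a = F b"
      by (simp add: first_factor_def)
    with a b show ?thesis
      using inj by (auto dest: inj_onD)
  next
    case False
    with eq short a b have "F (take n a) @ drop n a = F (take n b) @ drop n b"
      using insert_letter_first_factor by (metis not_less)
    moreover have "length (F (take n a)) = length (F (take n b))"
      using False short a b length_level_n by (simp add: words_take)
    ultimately have "F (take n a) = F (take n b)" "drop n a = drop n b"
      by simp_all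
    then show ?thesis
      using inj a b by (metis append_take_drop_id inj_onD words_take)
  qed
qed

lemma word_embedding_first_factor: "word_embedding \<Sigma> first_factor"
proof
  fix a
  assume "a \<in> words \<Sigma>"
  then show "first_factor a \<in> words \<Sigma>"
    using maps_words[of "take n a"] by (auto simp: first_factor_def words_iff words_take
        dest: in_set_takeD in_set_dropD)
next
  show "inj_on first_factor (words \<Sigma>)"
    by (rule inj_on_first_factor)
next
  fix a b
  assume "a \<in> words \<Sigma>" "b \<in> words \<Sigma>" "length a = length b"
  then show "length (first_factor a) = length (first_factor b)"
    using length_first_factor length_uniform[of a b] by simp
next
  fix a c
  assume a: "a \<in> words \<Sigma>" and c: "c \<in> \<Sigma>"
  consider "Suc (length a) < n" | "Suc (length a) = n" | "n \<le> length a"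
    by linarith
  then show "prefix (first_factor a @ [c]) (first_factor (a @ [c]))"
  proof cases
    case 1
    then show ?thesis
      using snoc_prefix[OF a c] by (simp add: first_factor_def)
  next
    case 2
    then have "prefix (F a @ [c]) (take L (F (a @ [c])))"
      using length_below_n[OF a] by (intro prefix_take snoc_prefix a c) simp_all
    with 2 show ?thesis
      by (simp add: first_factor_def)
  qed (simp add: first_factor_def)
qed

lemma first_factor_gap:
  assumes l: "l \<notin> length ` first_factor ` words \<Sigma>"
  shows "l < L" and "l \<notin> length ` F ` words \<Sigma>"
proof -
  obtain x where x: "x \<in> \<Sigma>"
    using nonempty by blast
  show "l < L"
  proof (rule ccontr)
    assume "\<not> l < L"
    moreover have "\<not> n + (l - L) < n"
      by simp
    ultimately have "length (first_factor (replicate (n + (l - L)) x)) = l"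
      using length_first_factor[OF words_replicate[OF x], of "n + (l - L)"]
      by (simp only: length_replicate if_False)
    then have "l \<in> length ` first_factor ` words \<Sigma>"
      using rev_image_eqI[OF rev_image_eqI[OF words_replicate[OF x] refl]] by metis
    with l show False ..
  qed
  show "l \<notin> length ` F ` words \<Sigma>"
  proof
    assume "l \<in> length ` F ` words \<Sigma>"
    then obtain b where b: "b \<in> words \<Sigma>" "length (F b) = l"
      by blast
    show False
    proof (cases "length b < n")
      case True
      with b l show False
        by (force simp: first_factor_def)
    next
      case False
      then have "Suc L \<le> l"
        using length_mono[OF b(1) words_take[OF b(1)], of n] length_level_n[of "take n b"] b
        by (simp add: words_take)
      with \<open>l < L\<close> show False
        by simp
    qed
  qed
qed

lemma boring_gaps_first_factor: "boring_gaps E (first_factor ` words \<Sigma>)"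
  unfolding boring_gaps_def
proof (intro allI impI)
  fix l
  assume "l \<notin> length ` first_factor ` words \<Sigma>"
  note l = first_factor_gap[OF this]
  then have "boring_level E (F ` words \<Sigma>) l"
    using boring_gaps by (simp add: boring_gaps_def)
  then show "boring_level E (first_factor ` words \<Sigma>) l"
  proof (rule boring_level_transfer)
    fix y
    assume "y \<in> first_factor ` words \<Sigma>" "l < length y"
    then obtain a where a: "a \<in> words \<Sigma>" "y = first_factor a"
      by blast
    show "\<exists>z\<in>F ` words \<Sigma>. l < length z \<and> take (Suc l) z = take (Suc l) y"
    proof (cases "length a < n")
      case True
      then show ?thesis
        using a \<open>l < length y\<close> by (auto simp: first_factor_def)
    next
      case False
      then have "length (F (take n a)) = Suc L"
        using a(1) length_level_n by (simp add: words_take)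
      then show ?thesis
        using a False l(1)
        by (intro bexI[of _ "F (take n a)"]) (auto simp: first_factor_def take_append words_take)
    qed
  qed
qed

lemma first_factor_in_M_E: "first_factor \<in> M_E \<Sigma> E"
  using word_embedding_first_factor boring_gaps_first_factor by (simp add: M_E_iff)

end

lemma M_E_factorisation:
  assumes E: "boring_family \<Sigma> E" and "\<Sigma> \<noteq> {}" and FM: "F \<in> M_E \<Sigma> E"
    and pos: "0 < tilde (words \<Sigma>) prefix F n"
    and skip: "skips (words \<Sigma>) prefix F (tilde (words \<Sigma>) prefix F n - 1)"
  shows "\<exists>F1\<in>M_E \<Sigma> E. \<exists>F2\<in>M_E \<Sigma> E.
    skips_only (words \<Sigma>) prefix F2 (tilde (words \<Sigma>) prefix F n - 1) \<and>
    (\<forall>a\<in>words \<Sigma>. level (words \<Sigma>) prefix a \<le> n \<longrightarrow> F2 (F1 a) = F a)"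
proof -
  interpret boring_embedding \<Sigma> F E
    using FM E by (simp add: M_E_iff_boring_embedding)
  define L where "L = F_tilde n - 1"
  have skipped: "L \<notin> length ` F ` words \<Sigma>"
    using skip by (simp add: skips_def tilde_range_eq L_def)
  then have "boring_level E (F ` words \<Sigma>) L"
    using boring_gaps by (simp add: boring_gaps_def)
  then obtain eL where eL: "eL \<in> E L"
    and eL_eq: "\<And>y. y \<in> F ` words \<Sigma> \<Longrightarrow> L < length y \<Longrightarrow> y ! L = eL (take L y)"
    unfolding boring_level_def by blast
  interpret skipped_level \<Sigma> F E n L eL
    by unfold_locales (use assms skipped eL eL_eq L_def in auto)
  obtain x where x: "x \<in> \<Sigma>"
    using assms(2) by blast
  have "\<forall>a\<in>words \<Sigma>. level (words \<Sigma>) prefix a \<le> n \<longrightarrow> insert_letter L eL (first_factor a) = F a"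
    using insert_letter_first_factor_eq by simp
  then show ?thesis
    using first_factor_in_M_E M_E_insert_letter[OF E eL x] unfolding L_def by blast
qed

theorem mainTheorem12:
  fixes \<Sigma> :: "'c set" and E :: "nat \<Rightarrow> ('c list \<Rightarrow> 'c) set"
  assumes "finite \<Sigma>" and "\<Sigma> \<noteq> {}"
    and "boring_family \<Sigma> E"
  shows "is_SM_tree (words \<Sigma>) prefix \<Sigma> (word_S \<Sigma>) (M_E \<Sigma> E)"
proof -
  obtain x where x: "x \<in> \<Sigma>"
    using assms(2) by blast
  have limits: "\<exists>G\<in>M_E \<Sigma> E. \<forall>i. \<forall>a\<in>words \<Sigma>. level (words \<Sigma>) prefix a \<le> i \<longrightarrow> G a = Fs i a"
    if "\<forall>i. Fs i \<in> M_E \<Sigma> E"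
      and "\<forall>i. \<forall>a\<in>words \<Sigma>. level (words \<Sigma>) prefix a \<le> i \<longrightarrow> Fs i a = Fs (Suc i) a" for Fs
    using M_E_limit[of Fs] that level_words by metis
  show ?thesis
    unfolding is_SM_tree_def
  proof (intro conjI)
    show "is_S_tree (words \<Sigma>) prefix \<Sigma> (word_S \<Sigma>)"
      using assms(1) by (rule S_tree_words)
    show "\<forall>F\<in>M_E \<Sigma> E. shape_preserving (words \<Sigma>) prefix (word_S \<Sigma>) F"
      by (simp add: M_E_def)
    show "\<exists>G\<in>M_E \<Sigma> E. \<forall>a\<in>words \<Sigma>. G a = a"
      by (intro bexI[OF _ M_E_id[OF x]]) simp
    show "\<forall>F\<in>M_E \<Sigma> E. \<forall>G\<in>M_E \<Sigma> E. \<exists>H\<in>M_E \<Sigma> E. \<forall>a\<in>words \<Sigma>. H a = F (G a)"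
    proof (intro ballI)
      fix F G
      assume "F \<in> M_E \<Sigma> E" "G \<in> M_E \<Sigma> E"
      then show "\<exists>H\<in>M_E \<Sigma> E. \<forall>a\<in>words \<Sigma>. H a = F (G a)"
        using M_E_comp[OF assms(3) x] by (intro bexI[of _ "\<lambda>a. F (G a)"]) simp_all
    qed
  qed (intro allI ballI impI, (elim conjE)?,
      rule limits M_E_factorisation[OF assms(3,2)] M_E_successor_copy[OF assms(3) x];
      assumption)+
qed

end
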